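(* Consider the ride-hailing model in the context with $L=2$ regions, demand rates $b_{12}=b_{22}=0$, $b_{11}>0$, $b_{21}>0$, and driving cost rate $c=0$. Then for all trip times, all $R\in(0,1)$, $M\ge0$, $N>0$, and every AV-first strategy, the AV-first profit is at least $\tfrac45$ of the optimal value of $\mathcal{OPT}$ (performance loss at most $20\%$); moreover the maximum performance loss $20\%$ is achieved when $M=\tfrac{b_{11}t_{11}}{2}$, $N=b_{11}t_{11}$, $t_{12}=t_{21}$ and $R\to1$ (i.e. for these parameters the performance loss $1-(\text{AV-first profit})/(\text{optimal value})$ tends to $1/5$ as $R\to1$).
   Context: Model. There are $L$ regions $\{1,\dots,L\}$. For regions $i,j$, $b_{ij}\ge0$ is the customer rate from $i$ to $j$; $b_i=\sum_j b_{ij}$ (assumed $>0$), $q_{ij}=b_{ij}/b_i$. $t_{ij}\ge0$ is the trip time of a customer trip from $i$ to $j$ (with $t_{ij}>0$ for $i\ne j$ and here $t_{11}>0$); the empty repositioning time from $i$ to $\alpha$ is $t_{i\alpha}$ for $\alpha\ne i$ and $0$ for $\alpha=i$. Constants: $p>0$, $c\ge0$, $R\in(0,1)$, CV fleet mass $N>0$, AV fleet mass $M\ge0$. For $i,\alpha$: $\tau^{dr}_{i\alpha}=\mathbf 1[\alpha\ne i]\,t_{i\alpha}+\sum_j q_{\alpha j}t_{\alpha j}$, $r^A_{i\alpha}=p\sum_j q_{\alpha j}t_{\alpha j}-c\tau^{dr}_{i\alpha}$, $r^C_{i\alpha}=p(1-R)\sum_j q_{\alpha j}t_{\alpha j}-c\tau^{dr}_{i\alpha}$,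 $r^{C2P}_{i\alpha}=pR\sum_j q_{\alpha j}t_{\alpha j}$. A matrix $\bm x\in\mathbb R^{L\times L}_{\ge0}$ satisfies flow balance if $\sum_j(\sum_k x_{kj})q_{ji}=\sum_\alpha x_{i\alpha}$ for all $i$. $\mathcal{CV}(\bm b^C)$: maximize $N\log\sum_{i,\alpha}r^C_{i\alpha}x_{i\alpha}-\sum_{i,\alpha}\tau^{dr}_{i\alpha}x_{i\alpha}$ over $\bm x\ge0$ satisfying flow balance and $\sum_j x_{ji}\le b^C_i$ for all $i$; $\pi(\bm b^C)=\sum_{i,\alpha}r^{C2P}_{i\alpha}x_{i\alpha}$ for an optimal solution $\bm x$ (same for all optimal solutions). $\mathcal{OPT}$: maximize $\sum_{i,\alpha}r^A_{i\alpha}x^A_{i\alpha}+\pi(\bm b^C)$ over $\bm b^C\in\mathbb R^L_{\ge0}$, $\bm x^A\in\mathbb R^{L\times L}_{\ge0}$ subject to $\sum_j x^A_{ji}+b^C_i\le b_i$ for all $i$, flow balance for $\bm x^A$, and $\sum_{i,\alpha}\tau^{dr}_{i\alpha}x^A_{i\alpha}\le M$. AV-first policy: an AV-first strategy $\hat{\bm x}^A$ maximizes $\sum_{i,\alpha}r^A_{i\alpha}x^A_{i\alpha}$ over $\bm x^A\ge0$ with $\sum_j x^A_{ji}\le b_i$ for all $i$, flow balance, and $\sum_{i,\alpha}\tau^{dr}_{i\alpha}x^A_{i\alpha}\le M$; the residual demand $\hat b^C_i=b_i-\sum_j\hat x^A_{ji}$ is revealed to CVs, and the AV-first profit is $\sum_{i,\alpha}r^A_{i\alpha}\hat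 x^A_{i\alpha}+\pi(\hat{\bm b}^C)$. *)

theory Defs
  imports "HOL-Analysis.Analysis"
begin

text \<open>Ride-hailing model with regions 1..L. Matrices are functions nat => nat => real;
  only the entries with indices in {1..L} are relevant.\<close>

definition brate :: "nat \<Rightarrow> (nat \<Rightarrow> nat \<Rightarrow> real) \<Rightarrow> nat \<Rightarrow> real" where
  "brate L b i = (\<Sum>j=1..L. b i j)"

definition qq :: "nat \<Rightarrow> (nat \<Rightarrow> nat \<Rightarrow> real) \<Rightarrow> nat \<Rightarrow> nat \<Rightarrow> real" where
  "qq L b i j = b i j / brate L b i"

definition avgtrip :: "nat \<Rightarrow> (nat \<Rightarrow> nat \<Rightarrow> real) \<Rightarrow> (nat \<Rightarrow> nat \<Rightarrow> real) \<Rightarrow> nat \<Rightarrow> real" where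
  "avgtrip L b t a = (\<Sum>j=1..L. qq L b a j * t a j)"

definition tau_dr :: "nat \<Rightarrow> (nat \<Rightarrow> nat \<Rightarrow> real) \<Rightarrow> (nat \<Rightarrow> nat \<Rightarrow> real) \<Rightarrow> nat \<Rightarrow> nat \<Rightarrow> real" where
  "tau_dr L b t i a = (if a \<noteq> i then t i a else 0) + avgtrip L b t a"

definition rA :: "nat \<Rightarrow> (nat \<Rightarrow> nat \<Rightarrow> real) \<Rightarrow> (nat \<Rightarrow> nat \<Rightarrow> real) \<Rightarrow> real \<Rightarrow> real
    \<Rightarrow> nat \<Rightarrow> nat \<Rightarrow> real" where
  "rA L b t p c i a = p * avgtrip L b t a - c * tau_dr L b t i a"

definition rC :: "nat \<Rightarrow> (nat \<Rightarrow> nat \<Rightarrow> real) \<Rightarrow> (nat \<Rightarrow> nat \<Rightarrow> real) \<Rightarrow> real \<Rightarrow> real \<Rightarrow> real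
    \<Rightarrow> nat \<Rightarrow> nat \<Rightarrow> real" where
  "rC L b t p c R i a = p * (1 - R) * avgtrip L b t a - c * tau_dr L b t i a"

definition rC2P :: "nat \<Rightarrow> (nat \<Rightarrow> nat \<Rightarrow> real) \<Rightarrow> (nat \<Rightarrow> nat \<Rightarrow> real) \<Rightarrow> real \<Rightarrow> real
    \<Rightarrow> nat \<Rightarrow> nat \<Rightarrow> real" where
  "rC2P L b t p R i a = p * R * avgtrip L b t a"

definition msum :: "nat \<Rightarrow> (nat \<Rightarrow> nat \<Rightarrow> real) \<Rightarrow> (nat \<Rightarrow> nat \<Rightarrow> real) \<Rightarrow> real" where
  "msum L f x = (\<Sum>i=1..L. \<Sum>a=1..L. f i a * x i a)"

definition colsum :: "nat \<Rightarrow> (nat \<Rightarrow> nat \<Rightarrow> real) \<Rightarrow> nat \<Rightarrow> real" where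
  "colsum L x i = (\<Sum>j=1..L. x j i)"

definition nonneg :: "nat \<Rightarrow> (nat \<Rightarrow> nat \<Rightarrow> real) \<Rightarrow> bool" where
  "nonneg L x \<longleftrightarrow> (\<forall>i\<in>{1..L}. \<forall>a\<in>{1..L}. 0 \<le> x i a)"

definition flow_balance :: "nat \<Rightarrow> (nat \<Rightarrow> nat \<Rightarrow> real) \<Rightarrow> (nat \<Rightarrow> nat \<Rightarrow> real) \<Rightarrow> bool" where
  "flow_balance L b x \<longleftrightarrow>
     (\<forall>i\<in>{1..L}. (\<Sum>j=1..L. colsum L x j * qq L b j i) = (\<Sum>a=1..L. x i a))"

definition cv_feasible :: "nat \<Rightarrow> (nat \<Rightarrow> nat \<Rightarrow> real) \<Rightarrow> (nat \<Rightarrow> real) \<Rightarrow> (nat \<Rightarrow> nat \<Rightarrow> real) \<Rightarrow> bool" where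
  "cv_feasible L b bC x \<longleftrightarrow> nonneg L x \<and> flow_balance L b x \<and> (\<forall>i\<in>{1..L}. colsum L x i \<le> bC i)"

definition cv_obj :: "nat \<Rightarrow> (nat \<Rightarrow> nat \<Rightarrow> real) \<Rightarrow> (nat \<Rightarrow> nat \<Rightarrow> real) \<Rightarrow> real \<Rightarrow> real \<Rightarrow> real
    \<Rightarrow> real \<Rightarrow> (nat \<Rightarrow> nat \<Rightarrow> real) \<Rightarrow> ereal" where
  "cv_obj L b t p c R N x =
     (let S = msum L (rC L b t p c R) x
      in if 0 < S then ereal (N * ln S - msum L (tau_dr L b t) x) else -\<infinity>)"

definition cv_optimal :: "nat \<Rightarrow> (nat \<Rightarrow> nat \<Rightarrow> real) \<Rightarrow> (nat \<Rightarrow> nat \<Rightarrow> real) \<Rightarrow> real \<Rightarrow> real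
    \<Rightarrow> real \<Rightarrow> real \<Rightarrow> (nat \<Rightarrow> real) \<Rightarrow> (nat \<Rightarrow> nat \<Rightarrow> real) \<Rightarrow> bool" where
  "cv_optimal L b t p c R N bC x \<longleftrightarrow> cv_feasible L b bC x \<and>
     (\<forall>y. cv_feasible L b bC y \<longrightarrow> cv_obj L b t p c R N y \<le> cv_obj L b t p c R N x)"

definition cv_pi :: "nat \<Rightarrow> (nat \<Rightarrow> nat \<Rightarrow> real) \<Rightarrow> (nat \<Rightarrow> nat \<Rightarrow> real) \<Rightarrow> real \<Rightarrow> real
    \<Rightarrow> real \<Rightarrow> real \<Rightarrow> (nat \<Rightarrow> real) \<Rightarrow> real" where
  "cv_pi L b t p c R N bC = msum L (rC2P L b t p R) (SOME x. cv_optimal L b t p c R N bC x)"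

definition opt_feasible :: "nat \<Rightarrow> (nat \<Rightarrow> nat \<Rightarrow> real) \<Rightarrow> (nat \<Rightarrow> nat \<Rightarrow> real) \<Rightarrow> real
    \<Rightarrow> (nat \<Rightarrow> real) \<Rightarrow> (nat \<Rightarrow> nat \<Rightarrow> real) \<Rightarrow> bool" where
  "opt_feasible L b t M bC xA \<longleftrightarrow> (\<forall>i\<in>{1..L}. 0 \<le> bC i) \<and> nonneg L xA \<and>
     (\<forall>i\<in>{1..L}. colsum L xA i + bC i \<le> brate L b i) \<and> flow_balance L b xA \<and>
     msum L (tau_dr L b t) xA \<le> M"

definition opt_value :: "nat \<Rightarrow> (nat \<Rightarrow> nat \<Rightarrow> real) \<Rightarrow> (nat \<Rightarrow> nat \<Rightarrow> real) \<Rightarrow> real \<Rightarrow> real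
    \<Rightarrow> real \<Rightarrow> real \<Rightarrow> real \<Rightarrow> real" where
  "opt_value L b t p c R N M =
     Sup {msum L (rA L b t p c) xA + cv_pi L b t p c R N bC | bC xA. opt_feasible L b t M bC xA}"

definition av_feasible :: "nat \<Rightarrow> (nat \<Rightarrow> nat \<Rightarrow> real) \<Rightarrow> (nat \<Rightarrow> nat \<Rightarrow> real) \<Rightarrow> real
    \<Rightarrow> (nat \<Rightarrow> nat \<Rightarrow> real) \<Rightarrow> bool" where
  "av_feasible L b t M xA \<longleftrightarrow> nonneg L xA \<and> (\<forall>i\<in>{1..L}. colsum L xA i \<le> brate L b i) \<and>
     flow_balance L b xA \<and> msum L (tau_dr L b t) xA \<le> M"

definition av_first :: "nat \<Rightarrow> (nat \<Rightarrow> nat \<Rightarrow> real) \<Rightarrow> (nat \<Rightarrow> nat \<Rightarrow> real) \<Rightarrow> real \<Rightarrow> real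
    \<Rightarrow> real \<Rightarrow> (nat \<Rightarrow> nat \<Rightarrow> real) \<Rightarrow> bool" where
  "av_first L b t p c M xA \<longleftrightarrow> av_feasible L b t M xA \<and>
     (\<forall>y. av_feasible L b t M y \<longrightarrow> msum L (rA L b t p c) y \<le> msum L (rA L b t p c) xA)"

definition av_first_profit :: "nat \<Rightarrow> (nat \<Rightarrow> nat \<Rightarrow> real) \<Rightarrow> (nat \<Rightarrow> nat \<Rightarrow> real) \<Rightarrow> real \<Rightarrow> real
    \<Rightarrow> real \<Rightarrow> real \<Rightarrow> (nat \<Rightarrow> nat \<Rightarrow> real) \<Rightarrow> real" where
  "av_first_profit L b t p c R N xA =
     msum L (rA L b t p c) xA + cv_pi L b t p c R N (\<lambda>i. brate L b i - colsum L xA i)"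

end

theory Submission
  imports Defs
begin

text \<open>All demand ends in region 1, so flow balance forces every vehicle to pick up in
  region 1, and a strategy is a split of its served trip time into \<open>w\<^sub>1\<close> (direct trips in
  region 1) and \<open>w\<^sub>2\<close> (trips from region 2, reached by an empty drive that makes each unit of
  trip time cost \<open>k = (t\<^sub>1\<^sub>2 + t\<^sub>2\<^sub>1) / t\<^sub>2\<^sub>1 > 1\<close> units of vehicle time).
  The CV problem then has an explicit solution, and the AV-first strategy is the greedy split
  that fills region 1 before region 2. If the AVs serve \<open>s = w\<^sub>1 + w\<^sub>2\<close>, the trip time served
  by AVs and CVs together is \<open>min (s + N) (max (A + w\<^sub>2) (s + N / k)) (A + B)\<close>, where \<open>A\<close>,
  \<open>B\<close> are the demanded trip times; against the greedy split this loses at most a factor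
  \<open>5/4\<close>, with slack \<open>(k - 2)\<^sup>2 / 4\<close>. The factor is approached for \<open>k = 2\<close>, \<open>M = A / 2\<close>,
  \<open>N = A\<close> and \<open>R \<rightarrow> 1\<close>, where the optimum sends the AVs to region 2 and leaves region 1
  to the CVs.\<close>

section \<open>The CV equilibrium in served-time coordinates\<close>

text \<open>The total \<open>u = w\<^sub>1 + w\<^sub>2\<close> at the maximum of \<open>N ln (w\<^sub>1 + w\<^sub>2) - (w\<^sub>1 + k w\<^sub>2)\<close>
  over \<open>0 \<le> w\<^sub>1 \<le> a\<close>, \<open>0 \<le> w\<^sub>2 \<le> c\<close>: the marginal value \<open>N / u\<close> equals the marginal
  cost, which is \<open>1\<close> while direct capacity lasts (\<open>u = N\<close>) and \<open>k\<close> beyond it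
  (\<open>u = N / k\<close>), with \<open>u\<close> clipped to \<open>[a, a + c]\<close> in between.\<close>

definition cv_served :: "real \<Rightarrow> real \<Rightarrow> real \<Rightarrow> real \<Rightarrow> real" where
  "cv_served N k a c = min N (min (max a (N / k)) (a + c))"

lemma cv_served_mono: "a \<le> a' \<Longrightarrow> c \<le> c' \<Longrightarrow> cv_served N k a c \<le> cv_served N k a' c'"
  unfolding cv_served_def by (auto simp: min_def max_def)

lemma cv_served_nonneg: "0 < N \<Longrightarrow> 1 < k \<Longrightarrow> 0 \<le> a \<Longrightarrow> 0 \<le> c \<Longrightarrow> 0 \<le> cv_served N k a c"
  unfolding cv_served_def by simp

lemma cv_served_pos: "0 < N \<Longrightarrow> 1 < k \<Longrightarrow> 0 \<le> a \<Longrightarrow> 0 < a + c \<Longrightarrow> 0 < cv_served N k a c"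
  unfolding cv_served_def by (auto simp: less_max_iff_disj)

lemma cv_served_le: "cv_served N k a c \<le> a + c"
  unfolding cv_served_def by simp

lemma add_cv_served_residual:
  "v1 + v2 + cv_served N k (A - v1) (B - v2) =
     min (v1 + v2 + N) (min (max (A + v2) (v1 + v2 + N / k)) (A + B))"
  unfolding cv_served_def by (simp add: min_add_distrib_left max_add_distrib_left)

lemma cv_served_first_order:
  fixes N k a c w1 w2 :: real
  assumes k: "1 < k" and N: "0 < N" and w: "0 \<le> w1" "w1 \<le> a" "0 \<le> w2" "w2 \<le> c"
  defines "u \<equiv> cv_served N k a c"
  shows "N * (w1 + w2 - u) \<le> u * ((w1 + k * w2) - (min u a + k * (u - min u a)))"
proof -
  define P where "P = N / k"
  have kP: "k * P = N" and P_pos: "0 < P" using k N by (simp_all add: P_def)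
  have PN: "P < N" using mult_strict_right_mono[OF k P_pos] kP by simp
  have u: "u = min N (min (max a P) (a + c))" by (simp add: u_def cv_served_def P_def)
  consider "N \<le> a" | "P \<le> a" "a < N" | "a < P" "P \<le> a + c" | "a + c < P"
    by linarith
  then show ?thesis
  proof cases
    case 1
    then have "u = N" using u w PN by (simp add: min_def max_def)
    moreover have "N * w2 \<le> N * (k * w2)" using k w N mult_right_mono[of 1 k w2] by simp
    ultimately show ?thesis using 1 by (simp add: algebra_simps)
  next
    case 2
    then have "u = a" using u w by (simp add: min_def max_def)
    moreover have "N \<le> k * a" using 2 kP k mult_left_mono[of P a k] by simp
    moreover have "0 \<le> (N - a) * (a - w1) + (k * a - N) * w2" using calculation 2 w by simp
    ultimately show ?thesis by (simp add: algebra_simps)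
  next
    case 3
    then have "u = P" "min u a = a" using u w PN by (auto simp: min_def max_def)
    moreover have "0 \<le> (N - P) * (a - w1)" using PN w by simp
    ultimately show ?thesis unfolding kP[symmetric] by (simp add: algebra_simps)
  next
    case 4
    then have "u = a + c" "min u a = a" using u w PN by (auto simp: min_def max_def)
    moreover have "k * (a + c) \<le> N" using 4 kP k mult_left_mono[of "a + c" P k] by simp
    moreover have "0 \<le> (N - (a + c)) * (a - w1) + (N - k * (a + c)) * (c - w2)"
      using calculation 4 PN w by simp
    ultimately show ?thesis by (simp add: algebra_simps)
  qed
qed

lemma ln_objective_le:
  fixes C u u' N T T' :: real
  assumes C: "0 < C" and u: "0 < u" "0 < u'" and N: "0 < N"
    and first_order: "N * (u - u') \<le> u' * (T - T')"
  shows "N * ln (C * u) - T \<le> N * ln (C * u') - T'"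
    and "u \<noteq> u' \<Longrightarrow> N * ln (C * u) - T < N * ln (C * u') - T'"
proof -
  have ln_diff: "N * ln (C * u) - N * ln (C * u') = N * (ln u - ln u')"
    using C u by (simp add: ln_mult algebra_simps)
  have T_diff: "N * ((u - u') / u') \<le> T - T'"
    using first_order u by (simp add: pos_divide_le_eq mult.commute mult.left_commute)
  have "N * (ln u - ln u') \<le> N * ((u - u') / u')"
    using ln_diff_le[OF u] N by (intro mult_left_mono) auto
  then show "N * ln (C * u) - T \<le> N * ln (C * u') - T'" using ln_diff T_diff by linarith
  assume "u \<noteq> u'"
  then have "N * (ln u - ln u') < N * ((u - u') / u')"
    using ln_diff_less[OF u] N by (intro mult_strict_left_mono) auto
  then show "N * ln (C * u) - T < N * ln (C * u') - T'" using ln_diff T_diff by linarith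
qed

definition cv_objective :: "real \<Rightarrow> real \<Rightarrow> real \<Rightarrow> real \<Rightarrow> real \<Rightarrow> ereal" where
  "cv_objective N k C w1 w2 =
     (if 0 < w1 + w2 then ereal (N * ln (C * (w1 + w2)) - (w1 + k * w2)) else -\<infinity>)"

lemma cv_objective_le_served:
  fixes N k C a c w1 w2 :: real
  assumes k: "1 < k" and N: "0 < N" and C: "0 < C"
    and w: "0 \<le> w1" "w1 \<le> a" "0 \<le> w2" "w2 \<le> c"
  defines "u \<equiv> cv_served N k a c"
  shows "cv_objective N k C w1 w2 \<le> cv_objective N k C (min u a) (u - min u a)"
    and "cv_objective N k C (min u a) (u - min u a) \<le> cv_objective N k C w1 w2 \<Longrightarrow> w1 + w2 = u"
proof -
  let ?opt = "cv_objective N k C (min u a) (u - min u a)" and ?obj = "cv_objective N k C w1 w2"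
  have u_nonneg: "0 \<le> u" using cv_served_nonneg[OF N k] w by (simp add: u_def)
  have "?obj \<le> ?opt \<and> (?opt \<le> ?obj \<longrightarrow> w1 + w2 = u)"
  proof (cases "w1 + w2 = 0")
    case True
    then have "?obj = -\<infinity>" by (simp add: cv_objective_def)
    moreover have "?opt \<le> -\<infinity> \<Longrightarrow> \<not> 0 < u" by (auto simp: cv_objective_def)
    ultimately show ?thesis using True u_nonneg by force
  next
    case False
    then have w_pos: "0 < w1 + w2" using w by simp
    then have u_pos: "0 < u" using cv_served_pos[OF N k] w by (simp add: u_def)
    have "N * (w1 + w2 - u) \<le> u * ((w1 + k * w2) - (min u a + k * (u - min u a)))"
      using cv_served_first_order[OF k N w] by (simp add: u_def)
    note ln_le = ln_objective_le[OF C w_pos u_pos N this]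
    have "?obj = ereal (N * ln (C * (w1 + w2)) - (w1 + k * w2))"
      and "?opt = ereal (N * ln (C * u) - (min u a + k * (u - min u a)))"
      using w_pos u_pos by (simp_all add: cv_objective_def)
    with ln_le show ?thesis by (metis ereal_less_eq(3) linorder_not_less)
  qed
  then show "?obj \<le> ?opt" and "?opt \<le> ?obj \<Longrightarrow> w1 + w2 = u" by auto
qed

section \<open>The greedy AV allocation loses at most a factor 5/4\<close>

definition split_feasible :: "real \<Rightarrow> real \<Rightarrow> real \<Rightarrow> real \<Rightarrow> real \<Rightarrow> real \<Rightarrow> bool" where
  "split_feasible A B k M v1 v2 \<longleftrightarrow> 0 \<le> v1 \<and> v1 \<le> A \<and> 0 \<le> v2 \<and> v2 \<le> B \<and> v1 + k * v2 \<le> M"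

locale av_greedy =
  fixes A B k M :: real
  assumes A_pos: "0 < A" and B_pos: "0 < B" and k_gt_1: "1 < k" and M_nonneg: "0 \<le> M"
begin

abbreviation feasible :: "real \<Rightarrow> real \<Rightarrow> bool" where
  "feasible \<equiv> split_feasible A B k M"

definition greedy_direct :: real where
  "greedy_direct = min M A"

definition greedy_repos :: real where
  "greedy_repos = min ((M - greedy_direct) / k) B"

lemma greedy_direct_eq: "M \<le> A \<Longrightarrow> greedy_direct = M" "A < M \<Longrightarrow> greedy_direct = A"
  by (simp_all add: greedy_direct_def)

lemma greedy_repos_eq_0: "M \<le> A \<Longrightarrow> greedy_repos = 0"
  using B_pos by (simp add: greedy_repos_def greedy_direct_eq)

lemma feasible_greedy: "feasible greedy_direct greedy_repos"
proof (cases "M \<le> A")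
  case True
  then show ?thesis using M_nonneg B_pos
    by (simp add: split_feasible_def greedy_direct_eq greedy_repos_eq_0)
next
  case False
  then have "greedy_direct = A" by (simp add: greedy_direct_eq)
  moreover have "k * greedy_repos \<le> M - A"
    using k_gt_1 mult_left_mono[of greedy_repos "(M - A) / k" k]
    by (simp add: greedy_repos_def calculation)
  ultimately show ?thesis using False A_pos B_pos k_gt_1
    by (simp add: split_feasible_def greedy_repos_def)
qed

lemma feasible_sum_le_greedy:
  assumes "feasible v1 v2"
  shows "v1 + v2 \<le> greedy_direct + greedy_repos"
proof (cases "M \<le> A")
  case True
  have "v2 \<le> k * v2" using assms k_gt_1 mult_right_mono[of 1 k v2] by (simp add: split_feasible_def)
  then show ?thesis using True assms by (simp add: split_feasible_def greedy_direct_eq greedy_repos_eq_0)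
next
  case False
  have "k * (v1 + v2) \<le> (k - 1) * v1 + M" using assms by (simp add: split_feasible_def algebra_simps)
  also have "\<dots> \<le> (k - 1) * A + M" using assms k_gt_1 by (simp add: split_feasible_def)
  finally have "v1 + v2 \<le> A + (M - A) / k"
    using k_gt_1 by (simp add: field_simps)
  moreover have "v1 + v2 \<le> A + B" using assms by (simp add: split_feasible_def)
  ultimately show ?thesis using False by (simp add: greedy_direct_eq greedy_repos_def)
qed

lemma feasible_eq_greedy:
  assumes feas: "feasible v1 v2" and ge: "greedy_direct + greedy_repos \<le> v1 + v2"
  shows "v1 = greedy_direct" and "v2 = greedy_repos"
proof -
  have "v1 = greedy_direct \<and> v2 = greedy_repos"
  proof (cases "M \<le> A")
    case True
    then have "(k - 1) * v2 \<le> 0" using feas ge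
      by (simp add: split_feasible_def greedy_direct_eq greedy_repos_eq_0 algebra_simps)
    then have "v2 = 0" using feas k_gt_1 by (simp add: split_feasible_def mult_le_0_iff)
    then show ?thesis using True feas ge
      by (simp add: split_feasible_def greedy_direct_eq greedy_repos_eq_0)
  next
    case A_lt_M: False
    show ?thesis
    proof (cases "(M - A) / k \<le> B")
      case True
      then have k_repos: "k * greedy_repos = M - A" using A_lt_M k_gt_1
        by (simp add: greedy_repos_def greedy_direct_eq)
      have "k * (greedy_direct + greedy_repos) \<le> k * (v1 + v2)" using ge k_gt_1 by simp
      then have "(k - 1) * A \<le> (k - 1) * v1"
        using feas k_repos A_lt_M by (simp add: split_feasible_def greedy_direct_eq algebra_simps)
      then have "v1 = A" using feas k_gt_1 by (simp add: split_feasible_def)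
      moreover from this have "k * v2 \<le> k * greedy_repos" using feas k_repos by (simp add: split_feasible_def)
      ultimately show ?thesis using ge k_gt_1 A_lt_M by (simp add: greedy_direct_eq)
    next
      case False
      then show ?thesis using A_lt_M feas ge by (simp add: split_feasible_def greedy_direct_eq greedy_repos_def)
    qed
  qed
  then show "v1 = greedy_direct" and "v2 = greedy_repos" by simp_all
qed

lemma direct_only_loss_bound:
  assumes M_le_A: "M \<le> A" and feas: "feasible v1 v2" and N: "0 < N"
  shows "min (v1 + v2 + N) (A + v2) \<le> 5/4 * max A (M + N / k)"
proof (rule ccontr)
  define Z where "Z = max A (M + N / k)"
  assume "\<not> ?thesis"
  then have "5/4 * Z < min (v1 + v2 + N) (A + v2)" unfolding Z_def by linarith
  then have s_big: "5/4 * Z < v1 + v2 + N" and v2_big: "5/4 * Z < A + v2"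
    by (simp_all only: min_less_iff_conj)
  have Z_ge: "A \<le> Z" "M + N / k \<le> Z" by (simp_all add: Z_def)
  have Z_nonneg: "0 \<le> Z" using A_pos Z_ge by simp
  have "Z / 4 \<le> v2" using v2_big Z_ge by linarith
  have "N \<le> k * (Z - M)"
    using Z_ge k_gt_1 mult_left_mono[of "N / k" "Z - M" k] by simp
  moreover have "(k - 1) * (k * v2) \<le> (k - 1) * M" using feas k_gt_1 by (simp add: split_feasible_def)
  ultimately have "v1 + v2 + N \<le> k * Z - (k - 1) * (k + 1) * v2"
    using feas by (simp add: split_feasible_def algebra_simps)
  also have "\<dots> \<le> k * Z - (k - 1) * (k + 1) * (Z / 4)"
    using \<open>Z / 4 \<le> v2\<close> k_gt_1 by (simp add: mult_left_mono)
  also have "\<dots> = 5/4 * Z - (k - 2)\<^sup>2 * Z / 4"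
    by (simp add: field_simps power2_eq_square)
  also have "\<dots> \<le> 5/4 * Z" using Z_nonneg by simp
  finally show False using s_big by simp
qed

lemma repos_loss_bound:
  assumes A_lt_M: "A < M" and feas: "feasible v1 v2" and v2_big: "greedy_repos < v2"
  shows "min (v1 + v2 + N) (A + v2) \<le> A + greedy_repos + N / k"
proof (cases "v2 - greedy_repos \<le> N / k")
  case True
  then show ?thesis by simp
next
  case False
  have "k * greedy_repos = M - A"
    using A_lt_M v2_big feas k_gt_1 by (auto simp: greedy_repos_def greedy_direct_eq split_feasible_def)
  then have "v1 + v2 \<le> A + greedy_repos - (k - 1) * (v2 - greedy_repos)"
    using feas by (simp add: split_feasible_def algebra_simps)
  moreover have "(k - 1) * (N / k) \<le> (k - 1) * (v2 - greedy_repos)"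
    using False k_gt_1 by (intro mult_left_mono) auto
  moreover have "(k - 1) * (N / k) = N - N / k" using k_gt_1 by (simp add: field_simps)
  ultimately have "v1 + v2 + N \<le> A + greedy_repos + N / k" by linarith
  then show ?thesis by simp
qed

lemma greedy_loss_bound:
  assumes feas: "feasible v1 v2" and N: "0 < N"
  shows "v1 + v2 + cv_served N k (A - v1) (B - v2)
    \<le> 5/4 * (greedy_direct + greedy_repos + cv_served N k (A - greedy_direct) (B - greedy_repos))"
proof -
  define s where "s = v1 + v2"
  define U where "U = greedy_direct + greedy_repos"
  define Z where "Z = max (A + greedy_repos) (U + N / k)"
  have s_le_U: "s \<le> U" using feasible_sum_le_greedy[OF feas] by (simp add: s_def U_def)
  let ?V = "v1 + v2 + cv_served N k (A - v1) (B - v2)"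
  have value_feas: "?V = min (s + N) (min (max (A + v2) (s + N / k)) (A + B))"
    by (simp add: add_cv_served_residual s_def)
  have value_greedy:
    "U + cv_served N k (A - greedy_direct) (B - greedy_repos) = min (U + N) (min Z (A + B))"
    by (simp add: add_cv_served_residual U_def Z_def)
  have U_nonneg: "0 \<le> U" and "0 \<le> Z"
    using feasible_greedy A_pos by (auto simp: split_feasible_def U_def Z_def)
  then have G_nonneg: "0 \<le> min (U + N) (min Z (A + B))" using N A_pos B_pos by simp
  show ?thesis
  proof (cases "A + v2 \<le> Z")
    case True
    then have "max (A + v2) (s + N / k) \<le> Z" using s_le_U by (simp add: Z_def)
    then have "min (s + N) (min (max (A + v2) (s + N / k)) (A + B))
        \<le> min (U + N) (min Z (A + B))"
      using s_le_U by (intro min.mono) auto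
    then show ?thesis using G_nonneg by (simp add: value_feas flip: U_def value_greedy)
  next
    case False
    have crux: "min (s + N) (A + v2) \<le> 5/4 * Z"
    proof (cases "M \<le> A")
      case True
      then have "Z = max A (M + N / k)"
        by (simp add: Z_def U_def greedy_direct_eq greedy_repos_eq_0)
      then show ?thesis using direct_only_loss_bound[OF True feas N] by (simp add: s_def)
    next
      case A_lt_M: False
      then have "greedy_repos < v2" using False by (simp add: Z_def)
      from repos_loss_bound[where N = N, OF _ feas this] A_lt_M
      have "min (s + N) (A + v2) \<le> Z"
        by (simp add: Z_def U_def greedy_direct_eq s_def)
      then show ?thesis using \<open>0 \<le> Z\<close> by simp
    qed
    have "max (A + v2) (s + N / k) = A + v2" using False s_le_U by (simp add: Z_def)
    then have "?V \<le> min (s + N) (A + v2)" and "?V \<le> s + N" and "?V \<le> A + B"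
      unfolding value_feas by (simp_all add: min_le_iff_disj)
    moreover have "s + N \<le> 5/4 * (U + N)" using s_le_U U_nonneg N by simp
    moreover have "A + B \<le> 5/4 * (A + B)" using A_pos B_pos by simp
    ultimately have "?V \<le> 5/4 * (U + N)" and "?V \<le> 5/4 * Z" and "?V \<le> 5/4 * (A + B)"
      using crux by linarith+
    then have "?V \<le> 5/4 * min (U + N) (min Z (A + B))" by (simp add: min_def)
    then show ?thesis by (simp only: value_greedy flip: U_def)
  qed
qed

lemma greedy_loss_bound_weighted:
  assumes feas: "feasible v1 v2" and N: "0 < N" and R: "0 \<le> R" "R \<le> 1"
    and c: "c1 \<le> A - v1" "c2 \<le> B - v2"
  shows "v1 + v2 + R * cv_served N k c1 c2
    \<le> 5/4 * (greedy_direct + greedy_repos + R * cv_served N k (A - greedy_direct) (B - greedy_repos))"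
proof -
  define s where "s = v1 + v2"
  define U where "U = greedy_direct + greedy_repos"
  define F where "F = cv_served N k (A - v1) (B - v2)"
  define G where "G = cv_served N k (A - greedy_direct) (B - greedy_repos)"
  have bound: "s + F \<le> 5/4 * (U + G)"
    using greedy_loss_bound[OF feas N] by (simp add: s_def F_def U_def G_def)
  have s_le_U: "s \<le> U" using feasible_sum_le_greedy[OF feas] by (simp add: s_def U_def)
  have U_nonneg: "0 \<le> U" using feasible_greedy by (simp add: split_feasible_def U_def)
  have "R * cv_served N k c1 c2 \<le> R * F"
    unfolding F_def using c R by (intro mult_left_mono cv_served_mono) auto
  moreover have "R * (s + F) \<le> R * (5/4 * (U + G))" using mult_left_mono[OF bound R(1)] .
  moreover have "(1 - R) * s \<le> (1 - R) * (5/4 * U)"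
    using s_le_U U_nonneg R by (intro mult_left_mono) auto
  ultimately have "s + R * cv_served N k c1 c2 \<le> 5/4 * (U + R * G)"
    by (simp add: algebra_simps)
  then show ?thesis by (simp add: s_def U_def G_def)
qed

end

section \<open>The two-region instance\<close>

lemma cv_pi_eqI:
  assumes "cv_optimal L b t p c R N bC x"
    and "\<And>y. cv_optimal L b t p c R N bC y \<Longrightarrow> msum L (rC2P L b t p R) y = v"
  shows "cv_pi L b t p c R N bC = v"
  unfolding cv_pi_def using assms by (metis someI)

declare One_nat_def [simp del] \<comment> \<open>keeps the region index \<open>1\<close> from turning into \<open>Suc 0\<close>\<close>

lemma atLeastAtMost_1_2: "{1..2::nat} = {1, 2}"
  by auto

text \<open>Flow balance forces \<open>x\<^sub>2\<^sub>1 = x\<^sub>2\<^sub>2 = 0\<close>; a strategy is then determined by the trip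
  times \<open>t\<^sub>1\<^sub>1 x\<^sub>1\<^sub>1\<close> and \<open>t\<^sub>2\<^sub>1 x\<^sub>1\<^sub>2\<close> it serves in regions 1 and 2, out of the
  demanded trip times \<open>A\<close> and \<open>B\<close>.\<close>

locale two_region =
  fixes b t :: "nat \<Rightarrow> nat \<Rightarrow> real" and p M :: real
  assumes b12: "b 1 2 = 0" and b22: "b 2 2 = 0" and b11_pos: "0 < b 1 1" and b21_pos: "0 < b 2 1"
    and t11_pos: "0 < t 1 1" and t12_pos: "0 < t 1 2" and t21_pos: "0 < t 2 1" and p_pos: "0 < p"
    and M_nonneg: "0 \<le> M"
begin

definition A :: real where "A = t 1 1 * b 1 1"
definition B :: real where "B = t 2 1 * b 2 1"
definition k :: real where "k = (t 1 2 + t 2 1) / t 2 1"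

lemma k_mult_t21: "k * t 2 1 = t 1 2 + t 2 1"
  using t21_pos by (simp add: k_def)

sublocale av_greedy A B k M
  using b11_pos b21_pos t11_pos t12_pos t21_pos M_nonneg
  by unfold_locales (simp_all add: A_def B_def k_def)

lemma brate_1: "brate 2 b 1 = b 1 1" and brate_2: "brate 2 b 2 = b 2 1"
  unfolding brate_def atLeastAtMost_1_2 by (simp_all add: b12 b22)

lemma qq_eq: "qq 2 b 1 1 = 1" "qq 2 b 1 2 = 0" "qq 2 b 2 1 = 1" "qq 2 b 2 2 = 0"
  using b11_pos b21_pos by (simp_all add: qq_def brate_1 brate_2 b12 b22)

lemma avgtrip_eq: "avgtrip 2 b t 1 = t 1 1" "avgtrip 2 b t 2 = t 2 1"
  unfolding avgtrip_def atLeastAtMost_1_2 by (simp_all add: qq_eq)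

lemma flow_balance_iff: "flow_balance 2 b x \<longleftrightarrow> x 2 1 + x 2 2 = 0"
  unfolding flow_balance_def colsum_def atLeastAtMost_1_2 by (simp add: qq_eq)

lemma nonneg_iff: "nonneg 2 x \<longleftrightarrow> 0 \<le> x 1 1 \<and> 0 \<le> x 1 2 \<and> 0 \<le> x 2 1 \<and> 0 \<le> x 2 2"
  unfolding nonneg_def atLeastAtMost_1_2 by auto

lemma colsum_eq: "colsum 2 x i = x 1 i + x 2 i"
  unfolding colsum_def atLeastAtMost_1_2 by simp

lemma msum_eq:
  assumes "y 2 1 = 0" "y 2 2 = 0"
  shows "msum 2 f y = f 1 1 * y 1 1 + f 1 2 * y 1 2"
  using assms unfolding msum_def atLeastAtMost_1_2 by simp

lemma msum_rA: "y 2 1 = 0 \<Longrightarrow> y 2 2 = 0 \<Longrightarrow>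
    msum 2 (rA 2 b t p 0) y = p * (t 1 1 * y 1 1 + t 2 1 * y 1 2)"
  and msum_rC: "y 2 1 = 0 \<Longrightarrow> y 2 2 = 0 \<Longrightarrow>
    msum 2 (rC 2 b t p 0 R) y = p * (1 - R) * (t 1 1 * y 1 1 + t 2 1 * y 1 2)"
  and msum_rC2P: "y 2 1 = 0 \<Longrightarrow> y 2 2 = 0 \<Longrightarrow>
    msum 2 (rC2P 2 b t p R) y = p * R * (t 1 1 * y 1 1 + t 2 1 * y 1 2)"
  by (simp_all add: msum_eq rA_def rC_def rC2P_def avgtrip_eq algebra_simps)

lemma msum_tau_dr: "y 2 1 = 0 \<Longrightarrow> y 2 2 = 0 \<Longrightarrow>
    msum 2 (tau_dr 2 b t) y = t 1 1 * y 1 1 + k * (t 2 1 * y 1 2)"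
  by (simp add: msum_eq tau_dr_def avgtrip_eq k_mult_t21 flip: mult.assoc)

lemma cv_feasible_iff:
  "cv_feasible 2 b bC y \<longleftrightarrow> y 2 1 = 0 \<and> y 2 2 = 0 \<and>
     0 \<le> t 1 1 * y 1 1 \<and> t 1 1 * y 1 1 \<le> t 1 1 * bC 1 \<and>
     0 \<le> t 2 1 * y 1 2 \<and> t 2 1 * y 1 2 \<le> t 2 1 * bC 2"
  using t11_pos t21_pos
  unfolding cv_feasible_def nonneg_iff flow_balance_iff colsum_eq atLeastAtMost_1_2
  by (auto simp: zero_le_mult_iff)

lemma av_feasible_iff:
  "av_feasible 2 b t M y \<longleftrightarrow> y 2 1 = 0 \<and> y 2 2 = 0 \<and>
     feasible (t 1 1 * y 1 1) (t 2 1 * y 1 2)"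
  using t11_pos t21_pos
  unfolding av_feasible_def split_feasible_def nonneg_iff flow_balance_iff colsum_eq
    atLeastAtMost_1_2 A_def B_def
  by (auto simp: zero_le_mult_iff msum_tau_dr brate_1 brate_2)

lemma opt_feasible_iff:
  "opt_feasible 2 b t M bC y \<longleftrightarrow> y 2 1 = 0 \<and> y 2 2 = 0 \<and>
     feasible (t 1 1 * y 1 1) (t 2 1 * y 1 2) \<and>
     0 \<le> bC 1 \<and> t 1 1 * bC 1 \<le> A - t 1 1 * y 1 1 \<and>
     0 \<le> bC 2 \<and> t 2 1 * bC 2 \<le> B - t 2 1 * y 1 2"
proof -
  have "y 1 1 + bC 1 \<le> b 1 1 \<longleftrightarrow> t 1 1 * bC 1 \<le> A - t 1 1 * y 1 1"
    using mult_le_cancel_left_pos[OF t11_pos, of "y 1 1 + bC 1" "b 1 1"]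
    by (simp add: A_def distrib_left) linarith
  moreover have "y 1 2 + bC 2 \<le> b 2 1 \<longleftrightarrow> t 2 1 * bC 2 \<le> B - t 2 1 * y 1 2"
    using mult_le_cancel_left_pos[OF t21_pos, of "y 1 2 + bC 2" "b 2 1"]
    by (simp add: B_def distrib_left) linarith
  ultimately show ?thesis
    using t11_pos t21_pos
    unfolding opt_feasible_def split_feasible_def nonneg_iff flow_balance_iff colsum_eq
      atLeastAtMost_1_2 A_def B_def
    by (auto simp: zero_le_mult_iff msum_tau_dr brate_1 brate_2)
qed

definition route_matrix :: "real \<Rightarrow> real \<Rightarrow> nat \<Rightarrow> nat \<Rightarrow> real" where
  "route_matrix w1 w2 i j =
     (if i = 1 \<and> j = 1 then w1 / t 1 1 else if i = 1 \<and> j = 2 then w2 / t 2 1 else 0)"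

lemma route_matrix_simps [simp]:
  "t 1 1 * route_matrix w1 w2 1 1 = w1" "t 2 1 * route_matrix w1 w2 1 2 = w2"
  "route_matrix w1 w2 2 1 = 0" "route_matrix w1 w2 2 2 = 0"
  using t11_pos t21_pos by (simp_all add: route_matrix_def)

lemma cv_obj_eq:
  assumes "R < 1" "y 2 1 = 0" "y 2 2 = 0"
  shows "cv_obj 2 b t p 0 R N y = cv_objective N k (p * (1 - R)) (t 1 1 * y 1 1) (t 2 1 * y 1 2)"
proof -
  have "0 < p * (1 - R)" using assms p_pos by simp
  from mult_less_cancel_left_pos[OF this, of 0] show ?thesis
    using assms by (simp add: cv_obj_def cv_objective_def msum_rC msum_tau_dr)
qed

lemma cv_pi_eq:
  assumes R: "R < 1" and N: "0 < N" and bC: "0 \<le> bC 1" "0 \<le> bC 2"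
  shows "cv_pi 2 b t p 0 R N bC = p * R * cv_served N k (t 1 1 * bC 1) (t 2 1 * bC 2)"
proof -
  define a where "a = t 1 1 * bC 1"
  define c where "c = t 2 1 * bC 2"
  define u where "u = cv_served N k a c"
  define x where "x = route_matrix (min u a) (u - min u a)"
  have ac: "0 \<le> a" "0 \<le> c" using bC t11_pos t21_pos by (simp_all add: a_def c_def)
  have C: "0 < p * (1 - R)" using p_pos R by simp
  have "0 \<le> u" "u \<le> a + c"
    using cv_served_nonneg[OF N k_gt_1 ac] cv_served_le by (simp_all add: u_def)
  then have x_feas: "cv_feasible 2 b bC x" using ac
    by (simp add: cv_feasible_iff x_def flip: a_def c_def)
  have cv_obj_x: "cv_obj 2 b t p 0 R N x = cv_objective N k (p * (1 - R)) (min u a) (u - min u a)"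
    using R by (simp add: cv_obj_eq x_def)
  have x_max: "cv_obj 2 b t p 0 R N y \<le> cv_obj 2 b t p 0 R N x"
    and x_max_unique: "cv_obj 2 b t p 0 R N x \<le> cv_obj 2 b t p 0 R N y \<Longrightarrow>
      t 1 1 * y 1 1 + t 2 1 * y 1 2 = u"
    if "cv_feasible 2 b bC y" for y
    using cv_objective_le_served[OF k_gt_1 N C, of "t 1 1 * y 1 1" a "t 2 1 * y 1 2" c] that R
    by (simp_all add: cv_obj_x cv_obj_eq cv_feasible_iff u_def flip: a_def c_def)
  have "cv_optimal 2 b t p 0 R N bC x"
    using x_feas x_max by (simp add: cv_optimal_def)
  then have "cv_pi 2 b t p 0 R N bC = p * R * u"
  proof (rule cv_pi_eqI)
    fix y assume "cv_optimal 2 b t p 0 R N bC y"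
    with x_feas x_max_unique show "msum 2 (rC2P 2 b t p R) y = p * R * u"
      by (auto simp: cv_optimal_def cv_feasible_iff msum_rC2P)
  qed
  then show ?thesis by (simp add: u_def a_def c_def)
qed

lemma av_first_eq_greedy:
  assumes "av_first 2 b t p 0 M xA"
  shows "xA 2 1 = 0" "xA 2 2 = 0"
    and "t 1 1 * xA 1 1 = greedy_direct" "t 2 1 * xA 1 2 = greedy_repos"
proof -
  have feas: "av_feasible 2 b t M xA"
    and max: "\<And>y. av_feasible 2 b t M y \<Longrightarrow> msum 2 (rA 2 b t p 0) y \<le> msum 2 (rA 2 b t p 0) xA"
    using assms by (simp_all add: av_first_def)
  then show xA2: "xA 2 1 = 0" "xA 2 2 = 0" by (simp_all add: av_feasible_iff)
  have "av_feasible 2 b t M (route_matrix greedy_direct greedy_repos)"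
    using feasible_greedy by (simp add: av_feasible_iff)
  from max[OF this] xA2 p_pos
  have "greedy_direct + greedy_repos \<le> t 1 1 * xA 1 1 + t 2 1 * xA 1 2"
    by (simp add: msum_rA)
  with feas xA2 feasible_eq_greedy
  show "t 1 1 * xA 1 1 = greedy_direct" "t 2 1 * xA 1 2 = greedy_repos"
    by (simp_all add: av_feasible_iff)
qed

definition greedy_profit :: "real \<Rightarrow> real \<Rightarrow> real" where
  "greedy_profit R N =
     p * (greedy_direct + greedy_repos + R * cv_served N k (A - greedy_direct) (B - greedy_repos))"

lemma av_first_profit_eq:
  assumes af: "av_first 2 b t p 0 M xA" and R: "R < 1" and N: "0 < N"
  shows "av_first_profit 2 b t p 0 R N xA = greedy_profit R N"
proof -
  note xA = av_first_eq_greedy[OF af]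
  have "t 1 1 * xA 1 1 \<le> A" "t 2 1 * xA 1 2 \<le> B"
    using feasible_greedy by (simp_all add: xA split_feasible_def)
  then have "0 \<le> b 1 1 - xA 1 1" "0 \<le> b 2 1 - xA 1 2"
    using t11_pos t21_pos by (simp_all add: A_def B_def)
  with cv_pi_eq[OF R N] xA show ?thesis
    by (simp add: av_first_profit_def greedy_profit_def msum_rA colsum_eq brate_1 brate_2
        right_diff_distrib A_def B_def algebra_simps)
qed

lemma opt_objective_le:
  assumes feas: "opt_feasible 2 b t M bC y" and R: "0 \<le> R" "R < 1" and N: "0 < N"
  shows "msum 2 (rA 2 b t p 0) y + cv_pi 2 b t p 0 R N bC \<le> 5/4 * greedy_profit R N"
proof -
  have y: "y 2 1 = 0" "y 2 2 = 0" "feasible (t 1 1 * y 1 1) (t 2 1 * y 1 2)"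
    and bC: "0 \<le> bC 1" "t 1 1 * bC 1 \<le> A - t 1 1 * y 1 1"
      "0 \<le> bC 2" "t 2 1 * bC 2 \<le> B - t 2 1 * y 1 2"
    using feas by (simp_all add: opt_feasible_iff)
  have "t 1 1 * y 1 1 + t 2 1 * y 1 2 + R * cv_served N k (t 1 1 * bC 1) (t 2 1 * bC 2)
      \<le> 5/4 * (greedy_direct + greedy_repos + R * cv_served N k (A - greedy_direct) (B - greedy_repos))"
    using greedy_loss_bound_weighted[OF y(3) N R(1)] R bC by simp
  from mult_left_mono[OF this less_imp_le[OF p_pos]] show ?thesis
    using y bC by (simp add: msum_rA cv_pi_eq[OF R(2) N] greedy_profit_def algebra_simps)
qed

lemma opt_value_le:
  assumes "0 \<le> R" "R < 1" "0 < N"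
  shows "opt_value 2 b t p 0 R N M \<le> 5/4 * greedy_profit R N"
  unfolding opt_value_def
proof (rule cSup_least)
  have "opt_feasible 2 b t M (\<lambda>i. 0) (\<lambda>i j. 0)"
    using M_nonneg A_pos B_pos by (simp add: opt_feasible_iff split_feasible_def)
  then show "{msum 2 (rA 2 b t p 0) xA + cv_pi 2 b t p 0 R N bC |bC xA. opt_feasible 2 b t M bC xA} \<noteq> {}"
    by blast
qed (use opt_objective_le assms in blast)

lemma opt_value_ge:
  assumes "opt_feasible 2 b t M bC y" "0 \<le> R" "R < 1" "0 < N"
  shows "msum 2 (rA 2 b t p 0) y + cv_pi 2 b t p 0 R N bC \<le> opt_value 2 b t p 0 R N M"
  unfolding opt_value_def
proof (rule cSup_upper)
  show "bdd_above {msum 2 (rA 2 b t p 0) xA + cv_pi 2 b t p 0 R N bC |bC xA. opt_feasible 2 b t M bC xA}"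
    using opt_objective_le assms(2-4) by (auto intro!: bdd_aboveI[of _ "5/4 * greedy_profit R N"])
qed (use assms(1) in blast)

lemma greedy_profit_half_budget:
  assumes "t 1 2 = t 2 1" "M = A / 2"
  shows "greedy_profit R A = p * A * (1 + R) / 2"
proof -
  have "k = 2" using assms t21_pos by (simp add: k_def)
  moreover have "greedy_direct = A / 2" "greedy_repos = 0"
    using assms A_pos by (simp_all add: greedy_direct_eq greedy_repos_eq_0)
  ultimately show ?thesis
    using A_pos B_pos by (simp add: greedy_profit_def cv_served_def algebra_simps)
qed

lemma opt_value_half_budget_ge:
  assumes "t 1 2 = t 2 1" "M = A / 2" "A \<le> 4 * B" and R: "0 \<le> R" "R < 1"
  shows "p * A * (1/4 + R) \<le> opt_value 2 b t p 0 R A M"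
proof -
  \<comment> \<open>The AVs serve region 2 only; the CVs get all of region 1.\<close>
  define bC where "bC i = (if i = 1 then b 1 1 else b 2 1 - A / (4 * t 2 1))" for i :: nat
  define y where "y = route_matrix 0 (A / 4)"
  have k: "k = 2" using assms t21_pos by (simp add: k_def)
  have bC_served: "t 1 1 * bC 1 = A" "t 2 1 * bC 2 = B - A / 4"
    using t21_pos by (simp_all add: bC_def A_def B_def right_diff_distrib)
  have "0 \<le> t 2 1 * bC 2" using bC_served(2) assms(3) by simp
  then have "0 \<le> bC 2" using t21_pos by (simp add: zero_le_mult_iff)
  then have y_feas: "opt_feasible 2 b t M bC y"
    using assms A_pos b11_pos bC_served
    by (simp add: opt_feasible_iff split_feasible_def y_def k bC_def)
  have "cv_served A k (t 1 1 * bC 1) (t 2 1 * bC 2) = A"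
    using A_pos assms(3) by (simp add: bC_served k cv_served_def)
  with cv_pi_eq[OF R(2) A_pos, of bC] \<open>0 \<le> bC 2\<close> b11_pos
  have "cv_pi 2 b t p 0 R A bC = p * R * A" by (simp add: bC_def)
  moreover have "msum 2 (rA 2 b t p 0) y = p * (A / 4)" by (simp add: y_def msum_rA)
  ultimately show ?thesis
    using opt_value_ge[OF y_feas R A_pos] by (simp add: algebra_simps)
qed

lemma av_first_loss_bounds:
  assumes "t 1 2 = t 2 1" "M = A / 2" "A \<le> 4 * B" and R: "0 \<le> R" "R < 1"
    and af: "av_first 2 b t p 0 M xA"
  shows "1 - (1 + R) / 2 / (1/4 + R) \<le> 1 - av_first_profit 2 b t p 0 R A xA / opt_value 2 b t p 0 R A M"
    and "1 - av_first_profit 2 b t p 0 R A xA / opt_value 2 b t p 0 R A M \<le> 1/5"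
proof -
  define V where "V = opt_value 2 b t p 0 R A M"
  have profit: "av_first_profit 2 b t p 0 R A xA = p * A * (1 + R) / 2"
    using av_first_profit_eq[OF af R(2) A_pos] greedy_profit_half_budget[OF assms(1,2)] by simp
  have opt_ge: "p * A * (1/4 + R) \<le> V"
    using opt_value_half_budget_ge[OF assms(1-3) R] by (simp add: V_def)
  have opt_le: "V \<le> 5/4 * (p * A * (1 + R) / 2)"
    using opt_value_le[OF R A_pos] greedy_profit_half_budget[OF assms(1,2)] by (simp add: V_def)
  have pA: "0 < p * A * (1/4 + R)" using p_pos A_pos R by simp
  then have opt_pos: "0 < V" using opt_ge by linarith
  have "p * A * (1 + R) / 2 / V \<le> p * A * (1 + R) / 2 / (p * A * (1/4 + R))"
    using opt_ge pA opt_pos p_pos A_pos R by (intro divide_left_mono) auto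
  also have "\<dots> = (1 + R) / 2 / (1/4 + R)" using p_pos A_pos by simp
  finally show "1 - (1 + R) / 2 / (1/4 + R) \<le> 1 - av_first_profit 2 b t p 0 R A xA / V"
    by (simp add: profit)
  have "4/5 \<le> p * A * (1 + R) / 2 / V" using opt_le opt_pos by (simp add: pos_le_divide_eq)
  then show "1 - av_first_profit 2 b t p 0 R A xA / V \<le> 1/5" by (simp add: profit)
qed

lemma av_first_loss_tendsto:
  assumes "t 1 2 = t 2 1" "M = A / 2" "A \<le> 4 * B"
    and af: "\<forall>R\<in>{0<..<1}. av_first 2 b t p 0 M (xh R)"
  shows "((\<lambda>R. 1 - av_first_profit 2 b t p 0 R A (xh R) / opt_value 2 b t p 0 R A M)
    \<longlongrightarrow> 1/5) (at_left 1)"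
proof (rule tendsto_sandwich[OF _ _ _ tendsto_const])
  have near_1: "eventually (\<lambda>R. R \<in> {0<..<1}) (at_left (1::real))"
    by (rule eventually_at_left_real) simp
  show "\<forall>\<^sub>F R in at_left 1. 1 - (1 + R) / 2 / (1/4 + R)
      \<le> 1 - av_first_profit 2 b t p 0 R A (xh R) / opt_value 2 b t p 0 R A M"
    and "\<forall>\<^sub>F R in at_left 1.
      1 - av_first_profit 2 b t p 0 R A (xh R) / opt_value 2 b t p 0 R A M \<le> 1/5"
    using near_1 by (eventually_elim, use av_first_loss_bounds[OF assms(1-3)] af in auto)+
  have "((\<lambda>R::real. 1 - (1 + R) / 2 / (1/4 + R)) \<longlongrightarrow> 1 - (1 + 1) / 2 / (1/4 + 1)) (at_left 1)"
    by (intro tendsto_intros) auto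
  then show "((\<lambda>R::real. 1 - (1 + R) / 2 / (1/4 + R)) \<longlongrightarrow> 1/5) (at_left 1)"
    by simp
qed

end

theorem lemma3:
  shows "(\<forall>(b::nat \<Rightarrow> nat \<Rightarrow> real) (t::nat \<Rightarrow> nat \<Rightarrow> real) (p::real) (R::real) (M::real) (N::real) xA.
            b 1 2 = 0 \<and> b 2 2 = 0 \<and> 0 < b 1 1 \<and> 0 < b 2 1 \<and>
            0 < t 1 1 \<and> 0 < t 1 2 \<and> 0 < t 2 1 \<and> 0 \<le> t 2 2 \<and>
            0 < p \<and> 0 < R \<and> R < 1 \<and> 0 \<le> M \<and> 0 < N \<and>
            av_first 2 b t p 0 M xA
          \<longrightarrow> av_first_profit 2 b t p 0 R N xA \<ge> 4/5 * opt_value 2 b t p 0 R N M)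
       \<and>
         (\<exists>(b::nat \<Rightarrow> nat \<Rightarrow> real) (t::nat \<Rightarrow> nat \<Rightarrow> real) (p::real).
            b 1 2 = 0 \<and> b 2 2 = 0 \<and> 0 < b 1 1 \<and> 0 < b 2 1 \<and>
            0 < t 1 1 \<and> 0 < t 1 2 \<and> 0 < t 2 1 \<and> 0 \<le> t 2 2 \<and> 0 < p \<and>
            t 1 2 = t 2 1 \<and>
            (let M = b 1 1 * t 1 1 / 2; N = b 1 1 * t 1 1 in
             \<forall>xh :: real \<Rightarrow> nat \<Rightarrow> nat \<Rightarrow> real.
               (\<forall>R\<in>{0<..<1}. av_first 2 b t p 0 M (xh R)) \<longrightarrow>
               ((\<lambda>R. 1 - av_first_profit 2 b t p 0 R N (xh R) / opt_value 2 b t p 0 R N M)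
                  \<longlongrightarrow> 1/5) (at_left 1)))"
proof (intro conjI allI impI, goal_cases)
  case (1 b t p R M N xA)
  then interpret two_region b t p M
    by unfold_locales auto
  from 1 show ?case
    using opt_value_le[of R N] av_first_profit_eq[of xA R N] by auto
next
  case 2
  define b0 :: "nat \<Rightarrow> nat \<Rightarrow> real" where "b0 i j = (if j = 1 then 1 else 0)" for i j :: nat
  define t0 :: "nat \<Rightarrow> nat \<Rightarrow> real" where "t0 i j = 1" for i j :: nat
  interpret two_region b0 t0 1 "1/2"
    by unfold_locales (simp_all add: b0_def t0_def)
  have "A = 1" "B = 1" by (simp_all add: A_def B_def b0_def t0_def)
  then have "((\<lambda>R. 1 - av_first_profit 2 b0 t0 1 0 R 1 (xh R) / opt_value 2 b0 t0 1 0 R 1 (1/2))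
      \<longlongrightarrow> 1/5) (at_left 1)"
    if "\<forall>R\<in>{0<..<1}. av_first 2 b0 t0 1 0 (1/2) (xh R)" for xh
    using av_first_loss_tendsto[of xh] that by (simp add: t0_def)
  then show ?case
    by (intro exI[of _ b0] exI[of _ t0] exI[of _ 1]) (simp add: b0_def t0_def Let_def)
qed

end
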